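(* Let $t$ be a positive integer. (1) If there exists a good vector with respect to $t$ of length $2t$, then for every positive integer $n$ with $(4t+1)\mid n$, $N_P(n,2t+1,4t+1)\le (t+1)n$. (2) For every positive integer $n$ with $(4t+2)\mid n$, $N_P(n,2t+1,4t+2)\le (t+1)n$.
   Context: Good vector: for a positive integer $t$, a vector $\mathbf v=(v_1,\dots,v_{2t})\in[t]^{2t}$ or $\mathbf v\in\{0,\dots,t\}^{2t+1}$ is good w.r.t. $t$ if every $j\in[t]=\{1,\dots,t\}$ appears exactly twice in $\mathbf v$ and whenever $v_i=v_{i'}=j\in[t]$ with $i<i'$ then $i'-i=j$. Fix a finite field $\mathbb{F}_q$. An $(n,N,k,m)$-PIR array code over $\mathbb{F}_q$ is an $\mathbb{F}_q$-linear map $\mathbf x\in\mathbb{F}_q^n\mapsto(\mathbf c_1,\dots,\mathbf c_m)$ with buckets $\mathbf c_\ell\in\mathbb{F}_q^{N_\ell}$, $N_\ell\ge1$ independent of $\mathbf x$, $\sum_\ell N_\ell=N$, such that for each $i\in[n]$ there is a partition of $[m]$ into $k$ sets $R_1,\dots,R_k$ such that for each $j$, $x_i$ is an $\mathbb{F}_q$-linear combination of values $f_\ell(\mathbf c_\ell)$, $\ell\in R_j$, for some linear functionals $f_\ell$ (independent of $\mathbf x$). $N_P(n,k,m)$ is the minimum $N$ for which such a code exists. *)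

theory Defs
  imports Main
begin

text \<open>Good vectors w.r.t. t, as lists (positions are 0-based here; only
differences of positions matter). Either of length 2t with entries in [t],
or of length 2t+1 with entries in {0,...,t}.\<close>
definition good_vec :: "nat \<Rightarrow> nat list \<Rightarrow> bool" where
  "good_vec t v \<longleftrightarrow>
     ((length v = 2*t \<and> set v \<subseteq> {1..t}) \<or> (length v = 2*t+1 \<and> set v \<subseteq> {0..t})) \<and>
     (\<forall>j\<in>{1..t}. count_list v j = 2) \<and>
     (\<forall>i i'. i < i' \<and> i' < length v \<and> v!i = v!i' \<and> v!i \<in> {1..t} \<longrightarrow> i' - i = v!i)"

text \<open>Messages are x :: nat => 'a,
of which only x 0,...,x (n-1) matter.  Bucket l < m has Nl l >= 1 coordinates;
coordinate p < Nl l of bucket l is the linear form  sum_{r<n} G l p r * x r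
(an arbitrary linear map F^n -> F^{Nl l}).  For each i < n there is a partition
R 0, ..., R (k-1) of {0..<m} into k (nonempty) sets and linear functionals
f l (given by coefficients f l p) on the buckets such that for every j < k,
x i is a linear combination (coefficients lam l) of the values f l (c l), l in R j.\<close>
definition pir_code :: "nat \<Rightarrow> nat \<Rightarrow> nat \<Rightarrow> nat \<Rightarrow> (nat \<Rightarrow> nat) \<Rightarrow> (nat \<Rightarrow> nat \<Rightarrow> nat \<Rightarrow> 'a::field) \<Rightarrow> bool" where
  "pir_code n N k m Nl G \<longleftrightarrow>
     (\<forall>l<m. Nl l \<ge> 1) \<and> (\<Sum>l<m. Nl l) = N \<and>
     (\<forall>i<n. \<exists>(R :: nat \<Rightarrow> nat set) (f :: nat \<Rightarrow> nat \<Rightarrow> 'a) (lam :: nat \<Rightarrow> 'a).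
        (\<forall>j<k. R j \<noteq> {}) \<and>
        (\<forall>j<k. \<forall>j'<k. j \<noteq> j' \<longrightarrow> R j \<inter> R j' = {}) \<and>
        (\<Union>j<k. R j) = {..<m} \<and>
        (\<forall>j<k. \<forall>x :: nat \<Rightarrow> 'a.
           x i = (\<Sum>l\<in>R j. lam l * (\<Sum>p<Nl l. f l p * (\<Sum>r<n. G l p r * x r)))))"

definition has_PIR :: "'a::field itself \<Rightarrow> nat \<Rightarrow> nat \<Rightarrow> nat \<Rightarrow> nat \<Rightarrow> bool" where
  "has_PIR T n N k m \<longleftrightarrow> (\<exists>Nl (G :: nat \<Rightarrow> nat \<Rightarrow> nat \<Rightarrow> 'a). pir_code n N k m Nl G)"

definition N_P :: "'a::field itself \<Rightarrow> nat \<Rightarrow> nat \<Rightarrow> nat \<Rightarrow> nat" where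
  "N_P T n k m = (LEAST N. has_PIR T n N k m)"

end

theory Submission
  imports Defs "HOL-Library.Disjoint_Sets"
begin

text \<open>
Index servers and message symbols by \<open>\<int>\<^sub>m\<close>, \<open>m = 4t+1\<close> or \<open>4t+2\<close>.  Given \<open>t\<close> pairs
\<open>{\<beta>\<^sub>i, \<eta>\<^sub>i}\<close> in \<open>\<int>\<^sub>m\<close>, server \<open>l\<close> stores \<open>x\<^sub>l\<close> and the \<open>t\<close> parities
\<open>x\<^bsub>l-\<beta>\<^sub>i\<^esub> + x\<^bsub>l-\<eta>\<^sub>i\<^esub>\<close>, i.e. \<open>t+1\<close> symbols.  If the \<open>2t\<close> elements
\<open>\<beta>\<^sub>i, \<eta>\<^sub>i\<close> and the \<open>2t\<close> differences \<open>\<plusminus>(\<beta>\<^sub>i - \<eta>\<^sub>i)\<close> are distinct and nonzero,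
then \<open>x\<^sub>a\<close> is recovered from \<open>2t+1\<close> disjoint sets of servers: \<open>{a}\<close> reads \<open>x\<^sub>a\<close>, and for every
element \<open>\<beta>\<close> of a pair with partner \<open>\<eta>\<close> the servers \<open>a+\<beta>\<close> and \<open>a+(\<beta>-\<eta>)\<close> read
\<open>x\<^sub>a + x\<^bsub>a+\<beta>-\<eta>\<^esub>\<close> and \<open>x\<^bsub>a+\<beta>-\<eta>\<^esub>\<close>; all remaining servers join \<open>{a}\<close>.
This gives an \<open>(m, (t+1)m, 2t+1, m)\<close> code, and stacking \<open>n/m\<close> independent copies gives
\<open>N = (t+1)n\<close>.  For \<open>m = 4t+1\<close> the pairs are the two positions of each value \<open>j\<close> of a
good vector shifted by \<open>t+1\<close>, with differences \<open>\<plusminus>j\<close>; for \<open>m = 4t+2\<close> an explicit family of odd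
elements with even differences works.
\<close>

definition bucket :: "nat \<Rightarrow> (nat \<Rightarrow> nat \<Rightarrow> nat \<Rightarrow> 'a::field) \<Rightarrow> nat \<Rightarrow> (nat \<Rightarrow> 'a) \<Rightarrow> nat \<Rightarrow> 'a" where
  "bucket n G l x p = (\<Sum>r<n. G l p r * x r)"

definition response :: "nat \<Rightarrow> (nat \<Rightarrow> nat) \<Rightarrow> (nat \<Rightarrow> nat \<Rightarrow> nat \<Rightarrow> 'a::field) \<Rightarrow> (nat \<Rightarrow> nat \<Rightarrow> 'a) \<Rightarrow> (nat \<Rightarrow> 'a) \<Rightarrow> nat \<Rightarrow> 'a" where
  "response n Nl G f x l = (\<Sum>p<Nl l. f l p * bucket n G l x p)"

definition recovers :: "nat \<Rightarrow> (nat \<Rightarrow> nat) \<Rightarrow> (nat \<Rightarrow> nat \<Rightarrow> nat \<Rightarrow> 'a::field) \<Rightarrow> (nat \<Rightarrow> nat \<Rightarrow> 'a) \<Rightarrow> (nat \<Rightarrow> 'a) \<Rightarrow> nat \<Rightarrow> nat set \<Rightarrow> bool" where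
  "recovers n Nl G f lam i S \<longleftrightarrow> (\<forall>x. x i = (\<Sum>l\<in>S. lam l * response n Nl G f x l))"

lemma partition_on_indexed:
  assumes ne: "\<forall>j<k. R j \<noteq> {}" and disj: "\<forall>j<k. \<forall>j'<k. j \<noteq> j' \<longrightarrow> R j \<inter> R j' = {}"
    and cover: "(\<Union>j<k. R j) = A"
  shows "partition_on A (R ` {..<k})" and "card (R ` {..<k}) = k"
proof -
  show "partition_on A (R ` {..<k})"
  proof (rule partition_onI)
    show "\<Union>(R ` {..<k}) = A"
      by (fact cover)
    show "disjnt S S'" if "S \<in> R ` {..<k}" "S' \<in> R ` {..<k}" "S \<noteq> S'" for S S'
      using that disj by (auto simp: disjnt_def)
    show "{} \<notin> R ` {..<k}"
      using ne by auto
  qed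
  have "inj_on R {..<k}"
  proof (rule inj_onI)
    fix j j' assume "j \<in> {..<k}" "j' \<in> {..<k}" "R j = R j'"
    then show "j = j'"
      using ne disj by (metis Int_absorb lessThan_iff)
  qed
  then show "card (R ` {..<k}) = k"
    by (simp add: card_image)
qed

lemma ex_indexed_partition_iff:
  assumes "finite A"
  shows "(\<exists>R. (\<forall>j<k. R j \<noteq> {}) \<and> (\<forall>j<k. \<forall>j'<k. j \<noteq> j' \<longrightarrow> R j \<inter> R j' = {}) \<and>
            (\<Union>j<k. R j) = A \<and> (\<forall>j<k. Q (R j)))
    \<longleftrightarrow> (\<exists>P. partition_on A P \<and> card P = k \<and> (\<forall>S\<in>P. Q S))"
proof
  assume "\<exists>R. (\<forall>j<k. R j \<noteq> {}) \<and> (\<forall>j<k. \<forall>j'<k. j \<noteq> j' \<longrightarrow> R j \<inter> R j' = {}) \<and>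
            (\<Union>j<k. R j) = A \<and> (\<forall>j<k. Q (R j))"
  then obtain R where R: "\<forall>j<k. R j \<noteq> {}" "\<forall>j<k. \<forall>j'<k. j \<noteq> j' \<longrightarrow> R j \<inter> R j' = {}"
    "(\<Union>j<k. R j) = A" and Q: "\<forall>j<k. Q (R j)"
    by (elim exE conjE) (rule that)
  have "\<forall>S\<in>R ` {..<k}. Q S"
    using Q by blast
  with partition_on_indexed[OF R] show "\<exists>P. partition_on A P \<and> card P = k \<and> (\<forall>S\<in>P. Q S)"
    by blast
next
  assume "\<exists>P. partition_on A P \<and> card P = k \<and> (\<forall>S\<in>P. Q S)"
  then obtain P where P: "partition_on A P" "card P = k" and Q: "\<forall>S\<in>P. Q S"
    by blast
  have "finite P"
    using P(1) \<open>finite A\<close> by (metis finite_UnionD partition_onD1)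
  then obtain R where R: "bij_betw R {..<k} P"
    using ex_bij_betw_nat_finite P(2) by (metis atLeast0LessThan)
  then have RP: "j < k \<Longrightarrow> R j \<in> P" for j
    by (auto dest: bij_betwE)
  have "\<forall>j<k. \<forall>j'<k. j \<noteq> j' \<longrightarrow> R j \<inter> R j' = {}"
  proof (intro allI impI)
    fix j j' assume "j < k" "j' < k" "j \<noteq> j'"
    then have "R j \<noteq> R j'"
      using R by (auto simp: bij_betw_def inj_on_def)
    then show "R j \<inter> R j' = {}"
      using RP \<open>j < k\<close> \<open>j' < k\<close> partition_onD2[OF P(1)] by (auto simp: disjoint_def)
  qed
  moreover have "\<forall>j<k. R j \<noteq> {}"
    using RP partition_onD3[OF P(1)] by metis
  moreover have "(\<Union>j<k. R j) = A"
    using R partition_onD1[OF P(1)] by (simp add: bij_betw_def)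
  moreover have "\<forall>j<k. Q (R j)"
    using RP Q by blast
  ultimately show "\<exists>R. (\<forall>j<k. R j \<noteq> {}) \<and> (\<forall>j<k. \<forall>j'<k. j \<noteq> j' \<longrightarrow> R j \<inter> R j' = {}) \<and>
            (\<Union>j<k. R j) = A \<and> (\<forall>j<k. Q (R j))"
    by blast
qed

lemma partition_on_bij_betw_image:
  assumes P: "partition_on A P" and f: "bij_betw f A B"
  shows "partition_on B ((`) f ` P)" and "card ((`) f ` P) = card P"
proof -
  have "{} \<notin> (`) f ` P"
    using partition_onD3[OF P] by auto
  then show "partition_on B ((`) f ` P)"
    using partition_on_inj_image[OF P bij_betw_imp_inj_on[OF f]] bij_betw_imp_surj_on[OF f] by simp
  have "inj_on ((`) f) P"
    using f partition_onD1[OF P] by (auto intro: inj_on_image simp: bij_betw_def)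
  then show "card ((`) f ` P) = card P"
    by (rule card_image)
qed

lemma pir_code_iff_partition:
  "pir_code n N k m Nl G \<longleftrightarrow>
     (\<forall>l<m. 1 \<le> Nl l) \<and> (\<Sum>l<m. Nl l) = N \<and>
     (\<forall>i<n. \<exists>P f lam. partition_on {..<m} P \<and> card P = k \<and> (\<forall>S\<in>P. recovers n Nl G f lam i S))"
proof -
  have "(\<exists>R f lam. (\<forall>j<k. R j \<noteq> {}) \<and> (\<forall>j<k. \<forall>j'<k. j \<noteq> j' \<longrightarrow> R j \<inter> R j' = {}) \<and>
          (\<Union>j<k. R j) = {..<m} \<and> (\<forall>j<k. recovers n Nl G f lam i (R j)))
    \<longleftrightarrow> (\<exists>P f lam. partition_on {..<m} P \<and> card P = k \<and> (\<forall>S\<in>P. recovers n Nl G f lam i S))"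
    (is "(\<exists>R f lam. ?indexed R f lam) \<longleftrightarrow> (\<exists>P f lam. ?partition P f lam)") for i
  proof -
    have iff: "(\<exists>R. ?indexed R f lam) \<longleftrightarrow> (\<exists>P. ?partition P f lam)" for f lam
      by (rule ex_indexed_partition_iff) simp
    show ?thesis
    proof
      assume "\<exists>R f lam. ?indexed R f lam"
      then obtain R f lam where "?indexed R f lam"
        by (elim exE) (rule that)
      then have "\<exists>P. ?partition P f lam"
        by (intro iff[THEN iffD1] exI)
      then show "\<exists>P f lam. ?partition P f lam"
        by (elim exE) (rule exI, rule exI, rule exI, assumption)
    next
      assume "\<exists>P f lam. ?partition P f lam"
      then obtain P f lam where "?partition P f lam"
        by (elim exE) (rule that)
      then have "\<exists>R. ?indexed R f lam"
        by (intro iff[THEN iffD2] exI)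
      then show "\<exists>R f lam. ?indexed R f lam"
        by (elim exE) (rule exI, rule exI, rule exI, assumption)
    qed
  qed
  then show ?thesis
    unfolding pir_code_def recovers_def response_def bucket_def by presburger
qed

lemma N_P_le: "has_PIR T n N k m \<Longrightarrow> N_P T n k m \<le> N"
  unfolding N_P_def by (rule Least_le)

lemma sum_lessThan_mult_blocks:
  fixes g :: "nat \<Rightarrow> 'a::comm_monoid_add"
  shows "(\<Sum>r<s * n. g r) = (\<Sum>q<s. \<Sum>r<n. g (q * n + r))"
proof -
  have block: "sum g {q * n..<q * n + n} = (\<Sum>r<n. g (q * n + r))" for q
    using sum.shift_bounds_nat_ivl[of g 0 "q * n" n]
    by (simp add: atLeast0LessThan add.commute)
  have "(\<Sum>r<s * n. g r) = (\<Sum>q<s. sum g {q * n..<q * n + n})"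
    by (rule sum.nat_group[symmetric])
  also have "\<dots> = (\<Sum>q<s. \<Sum>r<n. g (q * n + r))"
    by (simp only: block)
  finally show ?thesis .
qed

text \<open>Copy \<open>q\<close> of a code acts on the message symbols \<open>q n ..< q n + n\<close> and occupies the
coordinates \<open>q (Nl l) ..< (q + 1) (Nl l)\<close> of bucket \<open>l\<close>.\<close>

definition stack_gen :: "nat \<Rightarrow> (nat \<Rightarrow> nat) \<Rightarrow> (nat \<Rightarrow> nat \<Rightarrow> nat \<Rightarrow> 'a) \<Rightarrow> nat \<Rightarrow> nat \<Rightarrow> nat \<Rightarrow> 'a::field" where
  "stack_gen n Nl G l p r = (if p div Nl l = r div n then G l (p mod Nl l) (r mod n) else 0)"

definition stack_query :: "(nat \<Rightarrow> nat) \<Rightarrow> nat \<Rightarrow> (nat \<Rightarrow> nat \<Rightarrow> 'a) \<Rightarrow> nat \<Rightarrow> nat \<Rightarrow> 'a::field" where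
  "stack_query Nl q f l p = (if p div Nl l = q then f l (p mod Nl l) else 0)"

lemma bucket_stack_gen:
  assumes "q < s" and "p < Nl l"
  shows "bucket (s * n) (stack_gen n Nl G) l x (q * Nl l + p) = bucket n G l (\<lambda>r. x (q * n + r)) p"
proof -
  have "stack_gen n Nl G l (q * Nl l + p) (q' * n + r) = (if q' = q then G l p r else 0)" if "r < n" for q' r
    using that \<open>p < Nl l\<close> by (simp add: stack_gen_def)
  then have "(\<Sum>r<n. stack_gen n Nl G l (q * Nl l + p) (q' * n + r) * x (q' * n + r)) =
      (if q' = q then bucket n G l (\<lambda>r. x (q * n + r)) p else 0)" for q'
    by (cases "q' = q") (simp_all add: bucket_def)
  then have "bucket (s * n) (stack_gen n Nl G) l x (q * Nl l + p) =
      (\<Sum>q'<s. if q' = q then bucket n G l (\<lambda>r. x (q * n + r)) p else 0)"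
    by (simp only: bucket_def sum_lessThan_mult_blocks)
  then show ?thesis
    using \<open>q < s\<close> by simp
qed

lemma response_stack:
  assumes "q < s"
  shows "response (s * n) (\<lambda>l. s * Nl l) (stack_gen n Nl G) (stack_query Nl q f) x l =
           response n Nl G f (\<lambda>r. x (q * n + r)) l"
proof -
  have block: "(\<Sum>p<Nl l. stack_query Nl q f l (q' * Nl l + p) * bucket (s * n) (stack_gen n Nl G) l x (q' * Nl l + p)) =
      (if q' = q then response n Nl G f (\<lambda>r. x (q * n + r)) l else 0)"
    if "q' < s" for q'
    using that by (cases "q' = q") (simp_all add: stack_query_def bucket_stack_gen response_def)
  have "response (s * n) (\<lambda>l. s * Nl l) (stack_gen n Nl G) (stack_query Nl q f) x l =
      (\<Sum>q'<s. \<Sum>p<Nl l. stack_query Nl q f l (q' * Nl l + p) * bucket (s * n) (stack_gen n Nl G) l x (q' * Nl l + p))"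
    by (simp only: response_def sum_lessThan_mult_blocks)
  also have "\<dots> = (\<Sum>q'<s. if q' = q then response n Nl G f (\<lambda>r. x (q * n + r)) l else 0)"
    by (rule sum.cong) (simp_all add: block)
  finally show ?thesis
    using \<open>q < s\<close> by simp
qed

lemma has_PIR_stack:
  assumes "has_PIR TYPE('a::field) n N k m" and "1 \<le> s"
  shows "has_PIR TYPE('a) (s * n) (s * N) k m"
proof -
  obtain Nl and G :: "nat \<Rightarrow> nat \<Rightarrow> nat \<Rightarrow> 'a" where code: "pir_code n N k m Nl G"
    using assms(1) unfolding has_PIR_def by blast
  have "\<exists>P f lam. partition_on {..<m} P \<and> card P = k \<and>
      (\<forall>S\<in>P. recovers (s * n) (\<lambda>l. s * Nl l) (stack_gen n Nl G) f lam r S)"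
    if "r < s * n" for r
  proof -
    have "0 < n"
      using that by (cases n) auto
    then have "r div n < s" "r mod n < n"
      using that by (simp_all add: less_mult_imp_div_less mult.commute)
    then obtain P f lam where P: "partition_on {..<m} P" "card P = k"
      and rec: "\<forall>S\<in>P. recovers n Nl G f lam (r mod n) S"
      using code unfolding pir_code_iff_partition by blast
    have "recovers (s * n) (\<lambda>l. s * Nl l) (stack_gen n Nl G) (stack_query Nl (r div n) f) lam r S"
      if "S \<in> P" for S
      using rec that \<open>r div n < s\<close> by (simp add: recovers_def response_stack)
    then show ?thesis
      using P by blast
  qed
  moreover have "\<forall>l<m. 1 \<le> s * Nl l" "(\<Sum>l<m. s * Nl l) = s * N"
    using code \<open>1 \<le> s\<close> unfolding pir_code_iff_partition by (auto simp: sum_distrib_left[symmetric])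
  ultimately have "pir_code (s * n) (s * N) k m (\<lambda>l. s * Nl l) (stack_gen n Nl G)"
    unfolding pir_code_iff_partition by blast
  then show ?thesis
    unfolding has_PIR_def by blast
qed

definition sub_mod :: "nat \<Rightarrow> nat \<Rightarrow> nat \<Rightarrow> nat" where
  "sub_mod m x y = (x + m - y) mod m"

lemma sub_mod_less: "0 < m \<Longrightarrow> sub_mod m x y < m"
  by (simp add: sub_mod_def)

lemma sub_mod_eq_0_iff: "x < m \<Longrightarrow> y < m \<Longrightarrow> sub_mod m x y = 0 \<longleftrightarrow> x = y"
proof -
  assume "x < m" "y < m"
  then have "x + m - y = (if y \<le> x then m + (x - y) else x + m - y)" and "x + m - y < 2 * m"
    by auto
  then show ?thesis
    using \<open>x < m\<close> \<open>y < m\<close> by (auto simp: sub_mod_def mod_if)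
qed

lemma sub_mod_eqI: "k < m \<Longrightarrow> x + m - y = k \<or> x + m - y = m + k \<Longrightarrow> sub_mod m x y = k"
  by (auto simp: sub_mod_def)

lemma sub_mod_add_mod: "b < m \<Longrightarrow> c \<le> m \<Longrightarrow> sub_mod m ((a + b) mod m) c = (a + sub_mod m b c) mod m"
proof -
  assume "b < m" "c \<le> m"
  have "((a + b) mod m + m - c) mod m = ((a + b) mod m + (m - c)) mod m"
    using \<open>c \<le> m\<close> by simp
  also have "\<dots> = (a + (b + (m - c))) mod m"
    by (simp add: mod_add_left_eq add.assoc)
  also have "\<dots> = (a + (b + (m - c)) mod m) mod m"
    by (simp add: mod_add_right_eq)
  finally show ?thesis
    using \<open>c \<le> m\<close> by (simp add: sub_mod_def)
qed

lemma sub_mod_add_mod_cancel: "a < m \<Longrightarrow> w < m \<Longrightarrow> sub_mod m ((a + w) mod m) w = a"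
  using sub_mod_add_mod[of w m w a] by (simp add: sub_mod_def)

lemma sub_mod_add_mod_cancel_left: "a < m \<Longrightarrow> w < m \<Longrightarrow> sub_mod m ((a + w) mod m) a = w"
  using sub_mod_add_mod_cancel[of w m a] by (simp add: add.commute)

lemma add_sub_mod_cancel: "a < m \<Longrightarrow> l < m \<Longrightarrow> (a + sub_mod m l a) mod m = l"
proof -
  assume "a < m" "l < m"
  then have "(a + sub_mod m l a) mod m = (a + (l + m - a)) mod m"
    by (simp add: sub_mod_def mod_add_right_eq)
  also have "\<dots> = l"
    using \<open>a < m\<close> \<open>l < m\<close> by simp
  finally show ?thesis .
qed

lemma bij_betw_add_mod:
  fixes a m :: nat
  assumes "a < m"
  shows "bij_betw (\<lambda>w. (a + w) mod m) {..<m} {..<m}"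
proof (rule bij_betw_imageI)
  show "inj_on (\<lambda>w. (a + w) mod m) {..<m}"
  proof (rule inj_onI)
    fix x y assume "x \<in> {..<m}" "y \<in> {..<m}" "(a + x) mod m = (a + y) mod m"
    then have "sub_mod m ((a + x) mod m) a = sub_mod m ((a + y) mod m) a"
      by simp
    with \<open>x \<in> {..<m}\<close> \<open>y \<in> {..<m}\<close> show "x = y"
      using \<open>a < m\<close> by (simp add: sub_mod_add_mod_cancel_left)
  qed
  show "(\<lambda>w. (a + w) mod m) ` {..<m} = {..<m}"
  proof
    show "(\<lambda>w. (a + w) mod m) ` {..<m} \<subseteq> {..<m}"
      using \<open>a < m\<close> by auto
    show "{..<m} \<subseteq> (\<lambda>w. (a + w) mod m) ` {..<m}"
    proof
      fix l assume "l \<in> {..<m}"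
      then have "l = (a + sub_mod m l a) mod m" "sub_mod m l a \<in> {..<m}"
        using \<open>a < m\<close> by (simp_all add: add_sub_mod_cancel sub_mod_less)
      then show "l \<in> (\<lambda>w. (a + w) mod m) ` {..<m}"
        by (rule image_eqI)
    qed
  qed
qed

text \<open>\<open>u (i, True)\<close> and \<open>u (i, False)\<close> are the elements \<open>\<beta>\<^sub>i\<close> and \<open>\<eta>\<^sub>i\<close> of the \<open>i\<close>-th pair.\<close>

definition pair_diff :: "nat \<Rightarrow> (nat \<times> bool \<Rightarrow> nat) \<Rightarrow> nat \<times> bool \<Rightarrow> nat" where
  "pair_diff m u = (\<lambda>(i, b). sub_mod m (u (i, b)) (u (i, \<not> b)))"

definition pir_design :: "nat \<Rightarrow> nat \<Rightarrow> (nat \<times> bool \<Rightarrow> nat) \<Rightarrow> bool" where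
  "pir_design m t u \<longleftrightarrow>
     u ` ({..<t} \<times> UNIV) \<subseteq> {1..<m} \<and> inj_on u ({..<t} \<times> UNIV) \<and>
     inj_on (pair_diff m u) ({..<t} \<times> UNIV) \<and>
     u ` ({..<t} \<times> UNIV) \<inter> pair_diff m u ` ({..<t} \<times> UNIV) = {}"

lemma pir_designD:
  assumes "pir_design m t u" and "i < t"
  shows "0 < u (i, b)" "u (i, b) < m" "0 < pair_diff m u (i, b)" "pair_diff m u (i, b) < m"
proof -
  have u_range: "u (i, c) \<in> {1..<m}" for c
    using assms by (auto simp: pir_design_def image_subset_iff)
  show "0 < u (i, b)" "u (i, b) < m"
    using u_range[of b] by auto
  have "u (i, b) \<noteq> u (i, \<not> b)"
    using assms by (auto simp: pir_design_def dest: inj_onD)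
  then show "0 < pair_diff m u (i, b)" "pair_diff m u (i, b) < m"
    using u_range[of b] u_range[of "\<not> b"] by (auto simp: pair_diff_def sub_mod_eq_0_iff sub_mod_less intro!: gr0I)
qed

lemma pir_design_pairs_disjnt:
  assumes "pir_design m t u" and "ic \<in> {..<t} \<times> UNIV" "ic' \<in> {..<t} \<times> UNIV" "ic \<noteq> ic'"
  shows "disjnt {u ic, pair_diff m u ic} {u ic', pair_diff m u ic'}"
proof -
  have "inj_on u ({..<t} \<times> UNIV)" "inj_on (pair_diff m u) ({..<t} \<times> UNIV)"
    and disj: "u ` ({..<t} \<times> UNIV) \<inter> pair_diff m u ` ({..<t} \<times> UNIV) = {}"
    using assms(1) by (simp_all add: pir_design_def)
  then have "u ic \<noteq> u ic'" "pair_diff m u ic \<noteq> pair_diff m u ic'"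
    using assms(2-4) by (simp_all add: inj_on_contraD)
  moreover have "u ic \<noteq> pair_diff m u ic'" "pair_diff m u ic \<noteq> u ic'"
    using disj assms(2,3) by blast+
  ultimately show ?thesis
    by (auto simp: disjnt_def)
qed

text \<open>The recovery sets for \<open>x\<^sub>0\<close>; those for \<open>x\<^sub>a\<close> are their translates by \<open>a\<close>.\<close>

definition offset_blocks :: "nat \<Rightarrow> nat \<Rightarrow> (nat \<times> bool \<Rightarrow> nat) \<Rightarrow> nat set set" where
  "offset_blocks m t u =
     insert ({..<m} - u ` ({..<t} \<times> UNIV) - pair_diff m u ` ({..<t} \<times> UNIV))
       ((\<lambda>ic. {u ic, pair_diff m u ic}) ` ({..<t} \<times> UNIV))"

lemma offset_blocks_partition:
  assumes "pir_design m t u" and "0 < m"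
  shows "partition_on {..<m} (offset_blocks m t u)" and "card (offset_blocks m t u) = 2 * t + 1"
proof -
  define I where "I = {..<t} \<times> (UNIV :: bool set)"
  define d where "d = pair_diff m u"
  define C where "C = {..<m} - u ` I - d ` I"
  define pair where "pair ic = {u ic, d ic}" for ic
  have blocks: "offset_blocks m t u = insert C (pair ` I)"
    by (simp add: offset_blocks_def C_def I_def d_def pair_def)
  have bounds: "0 < u ic" "u ic < m" "0 < d ic" "d ic < m" if "ic \<in> I" for ic
    using that pir_designD[OF assms(1)] by (auto simp: I_def d_def)
  have "0 \<in> C"
    using bounds assms(2) by (fastforce simp: C_def)
  moreover have "0 \<notin> pair ic" if "ic \<in> I" for ic
    using bounds[OF that] by (simp add: pair_def)
  ultimately have C_notin: "C \<notin> pair ` I"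
    by blast
  have pair_disjnt: "disjnt (pair ic) (pair ic')" if "ic \<in> I" "ic' \<in> I" "ic \<noteq> ic'" for ic ic'
    using pir_design_pairs_disjnt[OF assms(1)] that by (simp add: pair_def d_def I_def)
  have "inj_on pair I"
  proof (rule inj_onI)
    fix ic ic' assume "ic \<in> I" "ic' \<in> I" "pair ic = pair ic'"
    then show "ic = ic'"
      using pair_disjnt by (fastforce simp: pair_def disjnt_def)
  qed
  then have "card (pair ` I) = 2 * t"
    by (simp add: card_image I_def card_cartesian_product)
  then show "card (offset_blocks m t u) = 2 * t + 1"
    using C_notin by (simp add: blocks I_def)
  show "partition_on {..<m} (offset_blocks m t u)"
    unfolding blocks
  proof (rule partition_onI)
    show "\<Union>(insert C (pair ` I)) = {..<m}"
      using bounds by (auto simp: C_def pair_def)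
    show "disjnt p q" if "p \<in> insert C (pair ` I)" "q \<in> insert C (pair ` I)" "p \<noteq> q" for p q
      using that pair_disjnt by (auto simp: C_def pair_def disjnt_def)
    show "{} \<notin> insert C (pair ` I)"
      using \<open>0 \<in> C\<close> by (auto simp: pair_def)
  qed
qed

definition cyclic_gen :: "nat \<Rightarrow> (nat \<times> bool \<Rightarrow> nat) \<Rightarrow> nat \<Rightarrow> nat \<Rightarrow> nat \<Rightarrow> 'a::field" where
  "cyclic_gen m u l p r =
     (if p = 0 then of_bool (r = l)
      else of_bool (r = sub_mod m l (u (p - 1, True))) + of_bool (r = sub_mod m l (u (p - 1, False))))"

lemma bucket_cyclic_gen:
  assumes "l < m"
  shows "bucket m (cyclic_gen m u) l x 0 = x l"
    and "bucket m (cyclic_gen m u) l x (Suc i) =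
           x (sub_mod m l (u (i, True))) + x (sub_mod m l (u (i, False)))"
  using assms by (simp_all add: bucket_def cyclic_gen_def distrib_right sum.distrib sub_mod_less)

lemma bucket_cyclic_gen_pair:
  assumes "a < m" and "u (i, True) < m" and "u (i, False) < m"
  shows "bucket m (cyclic_gen m u) ((a + u (i, b)) mod m) x (Suc i) =
           x a + x ((a + pair_diff m u (i, b)) mod m)"
  using assms
  by (cases b) (simp_all add: bucket_cyclic_gen pair_diff_def sub_mod_add_mod_cancel sub_mod_add_mod add.commute)

text \<open>The functional applied by the server at offset \<open>w\<close> from the requested index.\<close>

definition cyclic_read :: "nat \<Rightarrow> nat \<Rightarrow> (nat \<times> bool \<Rightarrow> nat) \<Rightarrow> nat \<Rightarrow> nat \<Rightarrow> 'a::field" where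
  "cyclic_read m t u w p =
     (if w \<in> u ` ({..<t} \<times> UNIV) then of_bool (p = Suc (fst (the_inv_into ({..<t} \<times> UNIV) u w)))
      else if w \<in> pair_diff m u ` ({..<t} \<times> UNIV) then - of_bool (p = 0)
      else of_bool (w = 0 \<and> p = 0))"

lemma sum_cyclic_read:
  fixes y :: "nat \<Rightarrow> 'a::field"
  assumes design: "pir_design m t u" and "i < t"
  shows "(\<Sum>p<Suc t. cyclic_read m t u (u (i, b)) p * y p) = y (Suc i)"
    and "(\<Sum>p<Suc t. cyclic_read m t u (pair_diff m u (i, b)) p * y p) = - y 0"
proof -
  have ic: "(i, b) \<in> {..<t} \<times> UNIV"
    using \<open>i < t\<close> by simp
  then show "(\<Sum>p<Suc t. cyclic_read m t u (u (i, b)) p * y p) = y (Suc i)"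
    using design \<open>i < t\<close> by (simp add: cyclic_read_def pir_design_def the_inv_into_f_f)
  have "pair_diff m u (i, b) \<notin> u ` ({..<t} \<times> UNIV)"
    using design ic by (auto simp: pir_design_def)
  then show "(\<Sum>p<Suc t. cyclic_read m t u (pair_diff m u (i, b)) p * y p) = - y 0"
    using ic \<open>i < t\<close> by (simp add: cyclic_read_def sum_negf)
qed

lemma sum_cyclic_read_outside:
  fixes y :: "nat \<Rightarrow> 'a::field"
  assumes "w \<notin> u ` ({..<t} \<times> UNIV)" and "w \<notin> pair_diff m u ` ({..<t} \<times> UNIV)"
  shows "(\<Sum>p<Suc t. cyclic_read m t u w p * y p) = (if w = 0 then y 0 else 0)"
  using assms by (simp add: cyclic_read_def)

definition cyclic_query :: "nat \<Rightarrow> nat \<Rightarrow> (nat \<times> bool \<Rightarrow> nat) \<Rightarrow> nat \<Rightarrow> nat \<Rightarrow> nat \<Rightarrow> 'a::field" where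
  "cyclic_query m t u a l = cyclic_read m t u (sub_mod m l a)"

abbreviation cyclic_response :: "nat \<Rightarrow> nat \<Rightarrow> (nat \<times> bool \<Rightarrow> nat) \<Rightarrow> nat \<Rightarrow> (nat \<Rightarrow> 'a::field) \<Rightarrow> nat \<Rightarrow> 'a" where
  "cyclic_response m t u a \<equiv> response m (\<lambda>_. Suc t) (cyclic_gen m u) (cyclic_query m t u a)"

lemma cyclic_response_eq:
  assumes "a < m" and "w < m"
  shows "cyclic_response m t u a x ((a + w) mod m) =
           (\<Sum>p<Suc t. cyclic_read m t u w p * bucket m (cyclic_gen m u) ((a + w) mod m) x p)"
  using assms by (simp add: response_def cyclic_query_def sub_mod_add_mod_cancel_left)

lemma cyclic_response_pair:
  assumes design: "pir_design m t u" and "a < m" and "i < t"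
  shows "cyclic_response m t u a x ((a + u (i, b)) mod m) +
         cyclic_response m t u a x ((a + pair_diff m u (i, b)) mod m)
         = x a"
proof -
  note bounds = pir_designD[OF design \<open>i < t\<close>]
  have "cyclic_response m t u a x ((a + u (i, b)) mod m) =
      bucket m (cyclic_gen m u) ((a + u (i, b)) mod m) x (Suc i)"
    by (simp only: cyclic_response_eq[OF \<open>a < m\<close> bounds(2)] sum_cyclic_read[OF design \<open>i < t\<close>])
  also have "\<dots> = x a + x ((a + pair_diff m u (i, b)) mod m)"
    using bounds \<open>a < m\<close> by (simp add: bucket_cyclic_gen_pair)
  finally have "cyclic_response m t u a x ((a + u (i, b)) mod m) =
      x a + x ((a + pair_diff m u (i, b)) mod m)" .
  moreover have "cyclic_response m t u a x ((a + pair_diff m u (i, b)) mod m) =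
      - bucket m (cyclic_gen m u) ((a + pair_diff m u (i, b)) mod m) x 0"
    by (simp only: cyclic_response_eq[OF \<open>a < m\<close> bounds(4)] sum_cyclic_read[OF design \<open>i < t\<close>])
  moreover have "bucket m (cyclic_gen m u) ((a + pair_diff m u (i, b)) mod m) x 0 = x ((a + pair_diff m u (i, b)) mod m)"
    using \<open>a < m\<close> by (simp add: bucket_cyclic_gen)
  ultimately show ?thesis
    by simp
qed

lemma cyclic_response_outside:
  assumes "a < m" and "w < m"
    and "w \<notin> u ` ({..<t} \<times> UNIV)" and "w \<notin> pair_diff m u ` ({..<t} \<times> UNIV)"
  shows "cyclic_response m t u a x ((a + w) mod m) =
           (if w = 0 then x a else 0)"
proof -
  have "cyclic_response m t u a x ((a + w) mod m) =
      (if w = 0 then bucket m (cyclic_gen m u) ((a + w) mod m) x 0 else 0)"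
    unfolding cyclic_response_eq[OF assms(1,2)] using assms(3,4) by (rule sum_cyclic_read_outside)
  then show ?thesis
    using \<open>a < m\<close> by (simp add: bucket_cyclic_gen)
qed

lemma recovers_cyclic_offset_block:
  assumes design: "pir_design m t u" and "a < m" and T: "T \<in> offset_blocks m t u"
  shows "recovers m (\<lambda>_. Suc t) (cyclic_gen m u :: nat \<Rightarrow> nat \<Rightarrow> nat \<Rightarrow> 'a::field) (cyclic_query m t u a) (\<lambda>_. 1) a
           ((\<lambda>w. (a + w) mod m) ` T)"
proof -
  define I where "I = {..<t} \<times> (UNIV :: bool set)"
  define resp :: "(nat \<Rightarrow> 'a) \<Rightarrow> nat \<Rightarrow> 'a" where "resp x w = cyclic_response m t u a x ((a + w) mod m)" for x w
  have "0 < m"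
    using \<open>a < m\<close> by simp
  have "T \<subseteq> {..<m}"
    using T offset_blocks_partition[OF design \<open>0 < m\<close>] by (auto dest: partition_onD1)
  moreover have "inj_on (\<lambda>w. (a + w) mod m) {..<m}"
    using bij_betw_add_mod[OF \<open>a < m\<close>] by (rule bij_betw_imp_inj_on)
  ultimately have "inj_on (\<lambda>w. (a + w) mod m) T"
    by (rule inj_on_subset[rotated])
  then have reindex: "(\<Sum>l\<in>(\<lambda>w. (a + w) mod m) ` T. cyclic_response m t u a x l) =
      (\<Sum>w\<in>T. resp x w)" for x
    by (simp add: sum.reindex resp_def)
  have sum_T: "(\<Sum>w\<in>T. resp x w) = x a" for x
  proof (cases "T \<in> (\<lambda>ic. {u ic, pair_diff m u ic}) ` I")
    case True
    then obtain i b where "i < t" and T_pair: "T = {u (i, b), pair_diff m u (i, b)}"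
      by (auto simp: I_def)
    have "u ` I \<inter> pair_diff m u ` I = {}" and "(i, b) \<in> I"
      using design \<open>i < t\<close> by (simp_all add: pir_design_def I_def)
    then have "u (i, b) \<noteq> pair_diff m u (i, b)"
      by blast
    then show ?thesis
      using cyclic_response_pair[OF design \<open>a < m\<close> \<open>i < t\<close>] by (simp add: T_pair resp_def)
  next
    case False
    then have T_rest: "T = {..<m} - u ` I - pair_diff m u ` I"
      using T unfolding offset_blocks_def I_def by blast
    have resp_T: "resp x w = (if w = 0 then x a else 0)" if "w \<in> T" for w
      unfolding resp_def by (rule cyclic_response_outside[OF \<open>a < m\<close>]) (use that in \<open>auto simp: T_rest I_def\<close>)
    have pos: "0 < u ic \<and> 0 < pair_diff m u ic" if "ic \<in> I" for ic
      using that pir_designD(1,3)[OF design] by (cases ic) (auto simp: I_def)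
    then have "0 \<notin> u ` I" "0 \<notin> pair_diff m u ` I"
      by (fastforce dest: pos)+
    then have "0 \<in> T"
      using \<open>0 < m\<close> by (simp add: T_rest)
    then show ?thesis
      using \<open>T \<subseteq> {..<m}\<close> resp_T by (simp add: sum.remove finite_subset)
  qed
  show ?thesis
    unfolding recovers_def using reindex sum_T by simp
qed
lemma pir_design_has_PIR:
  assumes design: "pir_design m t u"
  shows "has_PIR TYPE('a::field) m ((t + 1) * m) (2 * t + 1) m"
proof -
  have "\<exists>P f lam. partition_on {..<m} P \<and> card P = 2 * t + 1 \<and>
      (\<forall>S\<in>P. recovers m (\<lambda>_. Suc t) (cyclic_gen m u :: nat \<Rightarrow> nat \<Rightarrow> nat \<Rightarrow> 'a) f lam a S)"
    if "a < m" for a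
  proof -
    have "0 < m"
      using that by simp
    note blocks = offset_blocks_partition[OF design this]
    note shift = partition_on_bij_betw_image[OF blocks(1) bij_betw_add_mod[OF that]]
    have "\<forall>S\<in>(`) (\<lambda>w. (a + w) mod m) ` offset_blocks m t u.
        recovers m (\<lambda>_. Suc t) (cyclic_gen m u) (cyclic_query m t u a) (\<lambda>_. 1 :: 'a) a S"
      using recovers_cyclic_offset_block[OF design that] by blast
    with shift blocks(2) show ?thesis
      by (intro exI[of _ "(`) (\<lambda>w. (a + w) mod m) ` offset_blocks m t u"] exI conjI) simp_all
  qed
  moreover have "\<forall>l<m. 1 \<le> Suc t" "(\<Sum>l<m. Suc t) = (t + 1) * m"
    by simp_all
  ultimately have "pir_code m ((t + 1) * m) (2 * t + 1) m (\<lambda>_. Suc t) (cyclic_gen m u :: nat \<Rightarrow> nat \<Rightarrow> nat \<Rightarrow> 'a)"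
    unfolding pir_code_iff_partition by blast
  then show ?thesis
    unfolding has_PIR_def by blast
qed

lemma pir_design_has_PIR_dvd:
  assumes "pir_design m t u" and "m dvd n" and "1 \<le> n"
  shows "has_PIR TYPE('a::field) n ((t + 1) * n) (2 * t + 1) m"
proof -
  obtain s where "n = m * s"
    using assms(2) by (rule dvdE)
  then have "1 \<le> s"
    using assms(3) by (cases s) auto
  then have "has_PIR TYPE('a) (s * m) (s * ((t + 1) * m)) (2 * t + 1) m"
    using has_PIR_stack pir_design_has_PIR[OF assms(1)] by blast
  moreover have "s * m = n" "s * ((t + 1) * m) = (t + 1) * n"
    using \<open>n = m * s\<close> by (simp_all add: algebra_simps)
  ultimately show ?thesis
    by simp
qed

lemma count_list_ge_2_nth:
  assumes "2 \<le> count_list xs y"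
  obtains p p' where "p < p'" "p' < length xs" "xs ! p = y" "xs ! p' = y"
  using assms
proof (induction xs arbitrary: thesis)
  case Nil
  then show ?case by simp
next
  case (Cons z zs)
  show ?case
  proof (cases "z = y")
    case True
    then have "count_list zs y \<noteq> 0"
      using Cons.prems(2) by simp
    then have "y \<in> set zs"
      by (simp add: count_list_0_iff)
    then obtain p' where "p' < length zs" "zs ! p' = y"
      by (metis in_set_conv_nth)
    then show ?thesis
      using True Cons.prems(1)[of 0 "Suc p'"] by simp
  next
    case False
    then obtain p p' where "p < p'" "p' < length zs" "zs ! p = y" "zs ! p' = y"
      using Cons.IH Cons.prems(2) by auto
    then show ?thesis
      using Cons.prems(1)[of "Suc p" "Suc p'"] by simp
  qed
qed

lemma good_vec_occurrences:
  assumes "good_vec t v" and "length v = 2 * t" and "j \<in> {1..t}"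
  obtains p where "p + j < 2 * t" "v ! p = j" "v ! (p + j) = j"
proof -
  have "2 \<le> count_list v j"
    using assms(1,3) by (simp add: good_vec_def)
  then obtain p p' where "p < p'" "p' < length v" "v ! p = j" "v ! p' = j"
    by (rule count_list_ge_2_nth)
  moreover have "p' - p = j"
    using assms(1,3) calculation unfolding good_vec_def by auto
  ultimately show ?thesis
    using that assms(2) by (metis le_add_diff_inverse less_imp_le_nat)
qed

lemma pir_design_of_skolem_pairs:
  assumes inj: "inj_on pos ({..<t} \<times> UNIV)"
    and pos: "\<And>i. i < t \<Longrightarrow> pos (i, True) = pos (i, False) + Suc i \<and> pos (i, True) < 2 * t"
  shows "pir_design (4 * t + 1) t (\<lambda>ic. t + 1 + pos ic)"
proof -
  define m where "m = 4 * t + 1"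
  define u where "u = (\<lambda>ic. t + 1 + pos ic)"
  have pos_less: "pos (i, b) < 2 * t" if "i < t" for i b
    using pos[OF that] by (cases b) auto
  have diff: "pair_diff m u (i, b) = (if b then Suc i else 4 * t - i)" if "i < t" for i b
  proof -
    define k where "k = (if b then Suc i else 4 * t - i)"
    have "k < m"
      using that by (auto simp: k_def m_def)
    moreover have "u (i, b) + m - u (i, \<not> b) = k \<or> u (i, b) + m - u (i, \<not> b) = m + k"
      using pos[OF that] by (cases b) (auto simp: k_def m_def u_def)
    ultimately show ?thesis
      by (simp add: pair_diff_def sub_mod_eqI k_def)
  qed
  have "pir_design m t u"
    unfolding pir_design_def
  proof (intro conjI)
    show "u ` ({..<t} \<times> UNIV) \<subseteq> {1..<m}"
    proof (rule image_subsetI)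
      fix ic assume "ic \<in> {..<t} \<times> (UNIV :: bool set)"
      then obtain i b where "ic = (i, b)" "i < t"
        by auto
      then show "u ic \<in> {1..<m}"
        using pos_less[of i b] by (simp add: u_def m_def)
    qed
    show "inj_on u ({..<t} \<times> UNIV)"
      using inj by (simp add: u_def inj_on_def)
    show "inj_on (pair_diff m u) ({..<t} \<times> UNIV)"
      by (auto simp: inj_on_def diff split: if_splits)
    have "u (i, b) \<noteq> pair_diff m u (i', b')" if "i < t" "i' < t" for i b i' b'
      using pos_less[of i b] diff[of i' b'] that by (cases b') (simp_all add: u_def)
    then show "u ` ({..<t} \<times> UNIV) \<inter> pair_diff m u ` ({..<t} \<times> UNIV) = {}"
      by auto
  qed
  then show ?thesis
    by (simp add: m_def u_def)
qed

lemma good_vec_imp_pir_design: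
  assumes "good_vec t v" and "length v = 2 * t"
  shows "\<exists>u. pir_design (4 * t + 1) t u"
proof -
  have "\<forall>i<t. \<exists>p. p + Suc i < 2 * t \<and> v ! p = Suc i \<and> v ! (p + Suc i) = Suc i"
    using good_vec_occurrences[OF assms] by (metis Suc_leI atLeastAtMost_iff le_add1 plus_1_eq_Suc)
  then obtain P where P: "\<And>i. i < t \<Longrightarrow> P i + Suc i < 2 * t \<and> v ! P i = Suc i \<and> v ! (P i + Suc i) = Suc i"
    by metis
  define pos where "pos = (\<lambda>(i, b). P i + (if b then Suc i else 0))"
  have "inj_on pos ({..<t} \<times> UNIV)"
  proof (rule inj_onI)
    fix ic ic' assume "ic \<in> {..<t} \<times> UNIV" "ic' \<in> {..<t} \<times> UNIV" "pos ic = pos ic'"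
    moreover obtain i b i' b' where "ic = (i, b)" "ic' = (i', b')"
      by fastforce
    ultimately have "i < t" "i' < t" "pos (i, b) = pos (i', b')"
      by auto
    have "v ! pos (i, b) = Suc i" "v ! pos (i', b') = Suc i'"
      using P[OF \<open>i < t\<close>] P[OF \<open>i' < t\<close>] by (simp_all add: pos_def)
    then have "i = i'"
      using \<open>pos (i, b) = pos (i', b')\<close> by simp
    then show "ic = ic'"
      using \<open>pos (i, b) = pos (i', b')\<close> \<open>ic = (i, b)\<close> \<open>ic' = (i', b')\<close> by (auto simp: pos_def split: if_splits)
  qed
  moreover have "pos (i, True) = pos (i, False) + Suc i \<and> pos (i, True) < 2 * t" if "i < t" for i
    using P[OF that] by (simp add: pos_def)
  ultimately show ?thesis
    using pir_design_of_skolem_pairs by blast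
qed

lemma pir_design_4t_plus_2:
  "pir_design (4 * t + 2) t (\<lambda>(i, b). if b then (if odd i then i + 2 else 2 * t + 3 + i)
                                      else (if odd i then 4 * t + 2 - i else 2 * t + 1 - i))"
proof -
  define m where "m = 4 * t + 2"
  define u where "u = (\<lambda>(i, b). if b then (if odd i then i + 2 else 2 * t + 3 + i)
                                 else (if odd i then 4 * t + 2 - i else 2 * t + 1 - i))"
  have diff: "pair_diff m u (i, b) = (if b then 2 * i + 2 else 4 * t - 2 * i)" if "i < t" for i b
  proof -
    define k where "k = (if b then 2 * i + 2 else 4 * t - 2 * i)"
    have "k < m"
      using that by (auto simp: k_def m_def)
    moreover have "u (i, b) + m - u (i, \<not> b) = k \<or> u (i, b) + m - u (i, \<not> b) = m + k"
      using that by (cases b; cases "odd i") (auto simp: k_def m_def u_def)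
    ultimately show ?thesis
      by (simp add: pair_diff_def sub_mod_eqI k_def)
  qed
  have "pir_design m t u"
    unfolding pir_design_def
  proof (intro conjI)
    show "u ` ({..<t} \<times> UNIV) \<subseteq> {1..<m}"
      by (force simp: m_def u_def dest: odd_pos)
    show "inj_on u ({..<t} \<times> UNIV)"
      by (auto simp: inj_on_def u_def split: if_splits)
    show "inj_on (pair_diff m u) ({..<t} \<times> UNIV)"
      by (auto simp: inj_on_def diff split: if_splits)
    have odd_u: "odd (u (i, b))" if "i < t" for i b
      using that by (auto simp: u_def split: if_splits; presburger)
    have even_diff: "even (pair_diff m u (i, b))" if "i < t" for i b
      using that by (simp add: diff)
    have "u ic \<noteq> pair_diff m u ic'" if "ic \<in> {..<t} \<times> UNIV" "ic' \<in> {..<t} \<times> UNIV" for ic ic'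
      using that odd_u[of "fst ic" "snd ic"] even_diff[of "fst ic'" "snd ic'"] by auto
    then show "u ` ({..<t} \<times> UNIV) \<inter> pair_diff m u ` ({..<t} \<times> UNIV) = {}"
      by blast
  qed
  then show ?thesis
    by (simp add: m_def u_def)
qed

theorem corollary4p3:
  fixes t :: nat
  assumes "t \<ge> 1"
  shows "((\<exists>v. good_vec t v \<and> length v = 2*t) \<longrightarrow>
            (\<forall>n. n \<ge> 1 \<and> (4*t+1) dvd n \<longrightarrow>
               (\<exists>N. has_PIR TYPE('a::{finite,field}) n N (2*t+1) (4*t+1)) \<and>
               N_P TYPE('a) n (2*t+1) (4*t+1) \<le> (t+1)*n))
       \<and> (\<forall>n. n \<ge> 1 \<and> (4*t+2) dvd n \<longrightarrow>
               (\<exists>N. has_PIR TYPE('a) n N (2*t+1) (4*t+2)) \<and>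
               N_P TYPE('a) n (2*t+1) (4*t+2) \<le> (t+1)*n)"
proof -
  have bound: "(\<exists>N. has_PIR TYPE('a) n N (2*t+1) m) \<and> N_P TYPE('a) n (2*t+1) m \<le> (t+1)*n"
    if "pir_design m t u" and "n \<ge> 1 \<and> m dvd n" for m n u
    using pir_design_has_PIR_dvd[of m t u n] that N_P_le by blast
  show ?thesis
  proof (rule conjI; intro impI allI)
    fix n assume "\<exists>v. good_vec t v \<and> length v = 2*t" and "n \<ge> 1 \<and> (4*t+1) dvd n"
    then show "(\<exists>N. has_PIR TYPE('a) n N (2*t+1) (4*t+1)) \<and> N_P TYPE('a) n (2*t+1) (4*t+1) \<le> (t+1)*n"
      using bound good_vec_imp_pir_design by blast
  next
    fix n assume "n \<ge> 1 \<and> (4*t+2) dvd n"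
    then show "(\<exists>N. has_PIR TYPE('a) n N (2*t+1) (4*t+2)) \<and> N_P TYPE('a) n (2*t+1) (4*t+2) \<le> (t+1)*n"
      using bound[OF pir_design_4t_plus_2] by blast
  qed
qed

end
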